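(* Let $r\ge2$ be an integer and $\psi\in C_p(\mathbb{R})$. Assume there exist constants $m>0$ and $\alpha\ge0$ such that (i) $m\,d(x)\le\psi(x)$ for all $x\in[0,1]$, and (ii) $\Delta_{n,k}(y;\psi)\le\alpha$ for all $n\in\mathbb{N}_0$, $k\in\{0,1,\dots,r^n-1\}$, $y\in(0,1)$. If $2mr>\alpha$, then $U_\psi\in\mathcal{P}_c$ with $c=\frac{2mr-\alpha}{2(r-1)}$.
   Context: $C_p(\mathbb{R})$ denotes the set of all continuous functions $f:\mathbb{R}\to\mathbb{R}$ periodic with period $1$ with $f(0)=0$; $\mathbb{N}_0=\mathbb{N}\cup\{0\}$. $d(x)=\min\{|x-z|:z\in\mathbb{Z}\}$. For $\psi\in C_p(\mathbb{R})$, $U_\psi(x)=\sum_{j=0}^\infty r^{-j}\psi(r^jx)$. For $f\in C_p(\mathbb{R})$ and $(n,k,y)\in\mathbb{N}_0\times\mathbb{Z}\times(0,1)$: $\delta^+_{n,k}(y;f)=\dfrac{f(\frac{k+1}{r^n})-f(\frac{k+y}{r^n})}{\frac{1-y}{r^n}}$, $\delta^-_{n,k}(y;f)=\dfrac{f(\frac{k+y}{r^n})-f(\frac{k}{r^n})}{\frac{y}{r^n}}$, $\Delta_{n,k}(y;f)=2r^n(\delta^+_{n,k}(y;f)-\delta^-_{n,k}(y;f))$. For $c>0$, $\mathcal{P}_c$ is the set of $f\in C_p(\mathbb{R})$ with $\delta^+_{n,k}(y;f)-\delta^-_{n,k}(y;f)\le-c$ for all $(n,k,y)\in\mathbb{N}_0\times\mathbb{Z}\times(0,1)$.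 *)

theory Defs
  imports "HOL-Analysis.Analysis"
begin

definition Cp :: "(real \<Rightarrow> real) \<Rightarrow> bool" where
  "Cp f \<longleftrightarrow> continuous_on UNIV f \<and> (\<forall>x. f (x + 1) = f x) \<and> f 0 = 0"

definition dist_int :: "real \<Rightarrow> real" where
  "dist_int x = (INF z\<in>\<int>. \<bar>x - z\<bar>)"

definition U :: "nat \<Rightarrow> (real \<Rightarrow> real) \<Rightarrow> real \<Rightarrow> real" where
  "U r \<psi> x = (\<Sum>j. \<psi> (real r ^ j * x) / real r ^ j)"

definition delta_plus :: "nat \<Rightarrow> nat \<Rightarrow> int \<Rightarrow> real \<Rightarrow> (real \<Rightarrow> real) \<Rightarrow> real" where
  "delta_plus r n k y f =
     (f ((real_of_int k + 1) / real r ^ n) - f ((real_of_int k + y) / real r ^ n))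
       / ((1 - y) / real r ^ n)"

definition delta_minus :: "nat \<Rightarrow> nat \<Rightarrow> int \<Rightarrow> real \<Rightarrow> (real \<Rightarrow> real) \<Rightarrow> real" where
  "delta_minus r n k y f =
     (f ((real_of_int k + y) / real r ^ n) - f (real_of_int k / real r ^ n))
       / (y / real r ^ n)"

definition Delta :: "nat \<Rightarrow> nat \<Rightarrow> int \<Rightarrow> real \<Rightarrow> (real \<Rightarrow> real) \<Rightarrow> real" where
  "Delta r n k y f = 2 * real r ^ n * (delta_plus r n k y f - delta_minus r n k y f)"

definition Pc :: "nat \<Rightarrow> real \<Rightarrow> (real \<Rightarrow> real) set" where
  "Pc r c = {f. Cp f \<and> (\<forall>n::nat. \<forall>k::int. \<forall>y\<in>{0<..<1}.
      delta_plus r n k y f - delta_minus r n k y f \<le> - c)}"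

end

theory Submission
  imports Defs
begin

text \<open>
  The second difference \<open>\<delta>\<^sup>+ - \<delta>\<^sup>-\<close> of \<open>U\<^sub>\<psi>\<close> at level \<open>n\<close> is the sum of those of
  its terms \<open>r^-j \<psi>(r^j x)\<close>. For \<open>j < n\<close> such a term contributes the second difference of
  \<open>\<psi>\<close> at level \<open>n - j\<close>, which is at most \<open>\<alpha> / (2 r^(n-j))\<close> by (ii); these add up to at most
  \<open>\<alpha> / (2(r - 1))\<close>. For \<open>j \<ge> n\<close> the points \<open>k/r^n\<close> and \<open>(k+1)/r^n\<close> are mapped to integers,
  where \<open>\<psi>\<close> vanishes, and these terms add up to \<open>-U\<^sub>\<psi>(k + y) / (y(1 - y))\<close>.
  Finally, \<open>U\<^sub>\<psi>\<close> dominates every bounded \<open>\<phi>\<close> with \<open>\<phi>(x) \<le> \<psi>(x) + \<phi>(r x)/r\<close>, and by (i) the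
  periodic parabola \<open>\<phi>(x) = m r/(r - 1) \<cdot> {x}(1 - {x})\<close> is such a function, so
  \<open>U\<^sub>\<psi>(k + y) \<ge> m r/(r - 1) \<cdot> y(1 - y)\<close>.
\<close>

lemma Cp_plus_of_int:
  assumes "Cp f" shows "f (x + of_int k) = f x"
proof -
  interpret periodic_fun_simple' f
    by unfold_locales (use assms in \<open>simp add: Cp_def\<close>)
  show ?thesis by (rule plus_of_int)
qed

lemma Cp_of_int: "Cp f \<Longrightarrow> f (of_int k) = 0"
  using Cp_plus_of_int[of f 0 k] by (simp add: Cp_def)

lemma Cp_frac: "Cp f \<Longrightarrow> f (frac x) = f x"
  using Cp_plus_of_int[of f "frac x" "\<lfloor>x\<rfloor>"] by (simp add: frac_def)

lemma Cp_bounded: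
  assumes "Cp f" shows "bounded (range f)"
proof -
  have "range f \<subseteq> f ` {0..1}"
    using Cp_frac[OF assms] frac_ge_0 frac_lt_1 by (metis atLeastAtMost_iff image_eqI image_subsetI less_imp_le)
  moreover have "compact (f ` {0..1})"
    using assms by (intro compact_continuous_image) (auto simp: Cp_def intro: continuous_on_subset)
  ultimately show ?thesis
    using bounded_subset compact_imp_bounded by blast
qed

lemma dist_int_eq_min_frac: "dist_int x = min (frac x) (1 - frac x)"
proof -
  have lower: "min (frac x) (1 - frac x) \<le> \<bar>x - z\<bar>" if "z \<in> \<int>" for z
  proof -
    obtain j where "z = of_int j" using \<open>z \<in> \<int>\<close> by (auto elim: Ints_cases)
    moreover have "j \<le> \<lfloor>x\<rfloor> \<or> \<lfloor>x\<rfloor> + 1 \<le> j" by linarith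
    then have "of_int j \<le> x - frac x \<or> x - frac x + 1 \<le> of_int j"
      unfolding frac_def by (auto simp flip: of_int_le_iff)
    ultimately show ?thesis by auto
  qed
  have "bdd_below ((\<lambda>z. \<bar>x - z\<bar>) ` \<int>)" by (auto intro: bdd_belowI2[where m=0])
  then have upper: "dist_int x \<le> \<bar>x - z\<bar>" if "z \<in> \<int>" for z
    unfolding dist_int_def using that by (rule cINF_lower)
  have "dist_int x \<le> frac x" "dist_int x \<le> 1 - frac x"
    using upper[of "of_int \<lfloor>x\<rfloor>"] upper[of "of_int \<lfloor>x\<rfloor> + 1"]
    by (auto simp: frac_def)
  moreover have "min (frac x) (1 - frac x) \<le> dist_int x"
    unfolding dist_int_def by (rule cINF_greatest) (use lower in auto)
  ultimately show ?thesis by linarith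
qed

lemma Cp_ge_dist_int:
  assumes "Cp f" and "\<forall>x\<in>{0..1}. m * dist_int x \<le> f x"
  shows "m * dist_int x \<le> f x"
proof -
  have "frac x \<in> {0..1}" using frac_ge_0[of x] frac_lt_1[of x] by simp
  then have "m * dist_int (frac x) \<le> f (frac x)" using assms(2) by blast
  then show ?thesis by (simp add: Cp_frac[OF assms(1)] dist_int_eq_min_frac frac_frac)
qed

definition periodic_parabola :: "real \<Rightarrow> real" where
  "periodic_parabola x = frac x * (1 - frac x)"

lemma periodic_parabola_nonneg: "0 \<le> periodic_parabola x"
  unfolding periodic_parabola_def using frac_ge_0[of x] frac_lt_1[of x] by simp

lemma periodic_parabola_le_1: "periodic_parabola x \<le> 1"
  unfolding periodic_parabola_def using frac_ge_0[of x] frac_lt_1[of x]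
  by (simp add: mult_le_one)

lemma periodic_parabola_plus_of_int: "periodic_parabola (x + of_int k) = periodic_parabola x"
  unfolding periodic_parabola_def by (simp add: frac_def)

lemma periodic_parabola_uminus: "periodic_parabola (- x) = periodic_parabola x"
  unfolding periodic_parabola_def by (simp add: frac_neg)

lemma periodic_parabola_unit_interval:
  "0 \<le> y \<Longrightarrow> y < 1 \<Longrightarrow> periodic_parabola y = y * (1 - y)"
  by (simp add: periodic_parabola_def frac_eq)

lemma parabola_le_periodic_parabola_scaled:
  fixes r s :: real
  assumes "1 \<le> r" and "0 \<le> s"
  shows "r * (s * (1 - s)) \<le> (r - 1) * s + periodic_parabola (r * s)"
proof (cases "r * s < 1")
  case True
  then have "(r - 1) * s + periodic_parabola (r * s) - r * (s * (1 - s)) = (r - 1) * s * (1 - r * s)"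
    using assms by (simp add: periodic_parabola_unit_interval algebra_simps)
  also have "\<dots> \<ge> 0" using assms True by simp
  finally show ?thesis by simp
next
  case False
  then have "r * (s * (1 - s)) - (r - 1) * s = s * (1 - r * s)" by (simp add: algebra_simps)
  also have "\<dots> \<le> 0" using assms False by (simp add: mult_nonneg_nonpos)
  finally show ?thesis using periodic_parabola_nonneg[of "r * s"] by simp
qed

lemma periodic_parabola_scaling_le:
  fixes r :: nat
  assumes "1 \<le> r"
  shows "real r * periodic_parabola z
    \<le> (real r - 1) * dist_int z + periodic_parabola (real r * z)"
proof -
  define s where "s = frac z"
  have s: "0 \<le> s" "0 \<le> 1 - s" using frac_ge_0[of z] frac_lt_1[of z] by (auto simp: s_def)
  have "periodic_parabola (real r * z) = periodic_parabola (real r * s + of_int (int r * \<lfloor>z\<rfloor>))"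
    by (simp add: s_def frac_def algebra_simps)
  then have scaled_s: "periodic_parabola (real r * z) = periodic_parabola (real r * s)"
    by (simp only: periodic_parabola_plus_of_int)
  have "periodic_parabola (real r * (1 - s)) = periodic_parabola (- (real r * s) + of_int (int r))"
    by (simp add: algebra_simps)
  then have scaled_1s: "periodic_parabola (real r * z) = periodic_parabola (real r * (1 - s))"
    by (simp only: periodic_parabola_plus_of_int periodic_parabola_uminus scaled_s)
  have "periodic_parabola z = s * (1 - s)"
    by (simp add: periodic_parabola_def s_def)
  moreover have "real r * (s * (1 - s)) \<le> (real r - 1) * s + periodic_parabola (real r * z)"
    using parabola_le_periodic_parabola_scaled[of "real r" s] assms s by (simp add: scaled_s)
  moreover have "real r * (s * (1 - s)) \<le> (real r - 1) * (1 - s) + periodic_parabola (real r * (1 - s))"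
    using parabola_le_periodic_parabola_scaled[of "real r" "1 - s"] assms s
    by (simp add: algebra_simps)
  ultimately show ?thesis
    unfolding scaled_1s[symmetric] dist_int_eq_min_frac s_def[symmetric] by (simp add: min_def)
qed

lemma U_term_bound:
  assumes "r \<ge> 2" and "\<And>x. \<bar>f x\<bar> \<le> B"
  shows "norm (f (real r ^ j * x) / real r ^ j) \<le> B * (1 / real r) ^ j"
proof -
  have "norm (f (real r ^ j * x) / real r ^ j) = \<bar>f (real r ^ j * x)\<bar> / real r ^ j"
    by simp
  also have "\<dots> \<le> B / real r ^ j"
    using assms by (intro divide_right_mono) auto
  finally show ?thesis by (simp add: power_one_over)
qed

lemma summable_geometric_inverse: "r \<ge> 2 \<Longrightarrow> summable (\<lambda>j. B * (1 / real r) ^ j)"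
  by (intro summable_mult summable_geometric) auto

lemma U_sums:
  assumes "r \<ge> 2" and "bounded (range f)"
  shows "(\<lambda>j. f (real r ^ j * x) / real r ^ j) sums U r f x"
proof -
  obtain B where "\<And>x. \<bar>f x\<bar> \<le> B"
    using assms(2) by (auto simp: bounded_iff)
  then have "summable (\<lambda>j. f (real r ^ j * x) / real r ^ j)"
    using U_term_bound[OF assms(1)] summable_geometric_inverse[OF assms(1)]
    by (blast intro: summable_comparison_test')
  then show ?thesis by (simp add: U_def summable_sums)
qed

lemma continuous_U:
  assumes "r \<ge> 2" and "Cp f"
  shows "continuous_on UNIV (U r f)"
proof -
  obtain B where B: "\<And>x. \<bar>f x\<bar> \<le> B"
    using Cp_bounded[OF assms(2)] by (auto simp: bounded_iff)
  have limit: "uniform_limit UNIV (\<lambda>n x. \<Sum>j<n. f (real r ^ j * x) / real r ^ j) (U r f) sequentially"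
    unfolding U_def[abs_def]
    by (rule Weierstrass_m_test[OF _ summable_geometric_inverse[OF assms(1)]])
       (use U_term_bound[OF assms(1) B] in auto)
  have f: "continuous_on UNIV f" using assms(2) by (simp add: Cp_def)
  have "continuous_on UNIV (\<lambda>x. \<Sum>j<n. f (real r ^ j * x) / real r ^ j)" for n
    by (intro continuous_intros continuous_on_compose2[OF f]) (use assms in auto)
  then show ?thesis
    by (intro uniform_limit_theorem[OF _ limit]) auto
qed

lemma Cp_U:
  assumes "r \<ge> 2" and "Cp f"
  shows "Cp (U r f)"
proof -
  have "real r ^ j * (x + 1) = real r ^ j * x + of_int (int (r ^ j))" for j x
    by (simp add: algebra_simps)
  then have "f (real r ^ j * (x + 1)) = f (real r ^ j * x)" for j x
    by (simp only: Cp_plus_of_int[OF assms(2)])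
  then have "U r f (x + 1) = U r f x" for x by (simp add: U_def)
  moreover have "U r f 0 = 0" using assms(2) by (simp add: U_def Cp_def)
  ultimately show ?thesis using continuous_U[OF assms] by (simp add: Cp_def)
qed

lemma U_ge_subsolution:
  assumes "r \<ge> 2" and "bounded (range f)" and "bounded (range \<phi>)"
    and sub: "\<And>x. \<phi> x \<le> f x + \<phi> (real r * x) / real r"
  shows "\<phi> x \<le> U r f x"
proof -
  have partial: "\<phi> x \<le> (\<Sum>j<N. f (real r ^ j * x) / real r ^ j) + \<phi> (real r ^ N * x) / real r ^ N" for N
  proof (induction N)
    case 0
    show ?case by simp
  next
    case (Suc N)
    have "\<phi> (real r ^ N * x) / real r ^ N
        \<le> (f (real r ^ N * x) + \<phi> (real r * (real r ^ N * x)) / real r) / real r ^ N"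
      using sub[of "real r ^ N * x"] by (rule divide_right_mono) simp
    also have "\<dots> = f (real r ^ N * x) / real r ^ N + \<phi> (real r ^ Suc N * x) / real r ^ Suc N"
      by (simp add: add_divide_distrib mult.assoc)
    finally show ?case using Suc by simp
  qed
  obtain B where B: "\<And>x. \<bar>\<phi> x\<bar> \<le> B"
    using assms(3) by (auto simp: bounded_iff)
  have "\<forall>N. norm (\<phi> (real r ^ N * x) / real r ^ N) \<le> B * (1 / real r) ^ N"
    using U_term_bound[where f = \<phi>, OF assms(1) B] by blast
  moreover have "(\<lambda>N. B * (1 / real r) ^ N) \<longlonglongrightarrow> 0"
    using assms(1) tendsto_mult_right_zero[OF LIMSEQ_power_zero[of "1 / real r"]] by simp
  ultimately have "(\<lambda>N. \<phi> (real r ^ N * x) / real r ^ N) \<longlonglongrightarrow> 0"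
    by (rule Lim_null_comparison[OF always_eventually])
  moreover have "(\<lambda>N. \<Sum>j<N. f (real r ^ j * x) / real r ^ j) \<longlonglongrightarrow> U r f x"
    using U_sums[OF assms(1,2)] by (simp add: sums_def)
  ultimately have "(\<lambda>N. (\<Sum>j<N. f (real r ^ j * x) / real r ^ j) + \<phi> (real r ^ N * x) / real r ^ N)
      \<longlonglongrightarrow> U r f x"
    using tendsto_add[of _ "U r f x" _ _ 0] by simp
  then show ?thesis
    using partial by (intro LIMSEQ_le_const) auto
qed

lemma U_ge_periodic_parabola:
  assumes "r \<ge> 2" and "Cp f" and "m \<ge> 0" and "\<And>x. m * dist_int x \<le> f x"
  shows "m * real r / (real r - 1) * periodic_parabola x \<le> U r f x"
proof (rule U_ge_subsolution[OF assms(1) Cp_bounded[OF assms(2)]])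
  define c where "c = m * real r / (real r - 1)"
  have r1: "real r - 1 > 0" using assms(1) by simp
  show "bounded (range (\<lambda>x. c * periodic_parabola x))"
    using periodic_parabola_nonneg periodic_parabola_le_1
    by (intro boundedI[where B = "\<bar>c\<bar>"]) (auto simp: abs_mult mult_left_le)
  fix x
  have "c * periodic_parabola x
      \<le> m / (real r - 1) * ((real r - 1) * dist_int x + periodic_parabola (real r * x))"
    using mult_left_mono[OF periodic_parabola_scaling_le[of r x], of "m / (real r - 1)"] assms r1
    by (simp add: c_def)
  also have "\<dots> = m * dist_int x + c * periodic_parabola (real r * x) / real r"
    using r1 assms(1) by (simp add: c_def field_simps)
  also have "\<dots> \<le> f x + c * periodic_parabola (real r * x) / real r"
    using assms(4) by simp
  finally show "c * periodic_parabola x \<le> f x + c * periodic_parabola (real r * x) / real r" .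
qed

definition second_diff :: "nat \<Rightarrow> nat \<Rightarrow> int \<Rightarrow> real \<Rightarrow> (real \<Rightarrow> real) \<Rightarrow> real" where
  "second_diff r n k y f = delta_plus r n k y f - delta_minus r n k y f"

lemma Delta_eq_second_diff: "Delta r n k y f = 2 * real r ^ n * second_diff r n k y f"
  by (simp add: Delta_def second_diff_def)

lemma second_diff_sums:
  assumes "\<And>x. (\<lambda>j. F j x) sums f x"
  shows "(\<lambda>j. second_diff r n k y (F j)) sums second_diff r n k y f"
  unfolding second_diff_def delta_plus_def delta_minus_def
  by (intro sums_diff sums_divide assms)

lemma second_diff_rescale:
  assumes "r > 0"
  shows "second_diff r (n + j) k y (\<lambda>x. f (real r ^ j * x) / real r ^ j) = second_diff r n k y f"
proof -
  have scale: "real r ^ j * (t / real r ^ (n + j)) = t / real r ^ n" for t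
    using assms by (simp add: power_add)
  have "(a / real r ^ j - b / real r ^ j) / (c / real r ^ (n + j)) = (a - b) / (c / real r ^ n)"
    for a b c
    using assms by (simp add: power_add divide_simps flip: diff_divide_distrib)
  then show ?thesis
    unfolding second_diff_def delta_plus_def delta_minus_def scale by (simp only:)
qed

lemma second_diff_level_0:
  assumes "f (of_int k) = 0" and "f (of_int k + 1) = 0" and "0 < y" and "y < 1"
  shows "second_diff r 0 k y f = - f (of_int k + y) / (y * (1 - y))"
  using assms by (simp add: second_diff_def delta_plus_def delta_minus_def field_simps)

lemma second_diff_mod:
  assumes "Cp f" and "r > 0"
  shows "second_diff r n (k mod int (r ^ n)) y f = second_diff r n k y f"
proof -
  have "real_of_int k = of_int (k mod int (r ^ n)) + real (r ^ n) * of_int (k div int (r ^ n))"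
    by (metis mod_mult_div_eq of_int_add of_int_mult of_int_of_nat_eq)
  then have "(of_int k + t) / real r ^ n
      = (of_int (k mod int (r ^ n)) + t) / real r ^ n + of_int (k div int (r ^ n))" for t
    using assms(2) by (simp add: field_simps)
  then have "f ((of_int (k mod int (r ^ n)) + t) / real r ^ n) = f ((of_int k + t) / real r ^ n)" for t
    by (simp add: Cp_plus_of_int[OF assms(1)])
  from this[of 0] this[of 1] this[of y] show ?thesis
    by (simp add: second_diff_def delta_plus_def delta_minus_def)
qed

lemma second_diff_le_of_Delta_le:
  assumes "Cp f" and "r > 0"
    and "\<And>k. 0 \<le> k \<Longrightarrow> k \<le> int (r ^ n) - 1 \<Longrightarrow> Delta r n k y f \<le> \<alpha>"
  shows "second_diff r n k y f \<le> \<alpha> / 2 * (1 / real r) ^ n"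
proof -
  have "0 \<le> k mod int (r ^ n)" "k mod int (r ^ n) \<le> int (r ^ n) - 1"
    using assms(2) by simp_all
  then have "Delta r n (k mod int (r ^ n)) y f \<le> \<alpha>"
    by (rule assms(3))
  then have "2 * real r ^ n * second_diff r n k y f \<le> \<alpha>"
    by (simp only: Delta_eq_second_diff second_diff_mod[OF assms(1,2)])
  then show ?thesis
    using assms(2) by (simp add: power_one_over field_simps)
qed

lemma second_diff_U:
  assumes "r \<ge> 2" and "Cp f" and "0 < y" and "y < 1"
  shows "second_diff r n k y (U r f)
    = (\<Sum>p=1..n. second_diff r p k y f) - U r f (of_int k + y) / (y * (1 - y))"
proof -
  define F where "F j = (\<lambda>x. f (real r ^ j * x) / real r ^ j)" for j
  have r: "r > 0" using assms(1) by simp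
  have F_sums: "(\<lambda>j. F j x) sums U r f x" for x
    using U_sums[OF assms(1) Cp_bounded[OF assms(2)]] by (simp add: F_def)
  have F_of_int: "F j (of_int i) = 0" for j i
  proof -
    have "f (real r ^ j * of_int i) = 0"
      using Cp_of_int[OF assms(2), of "int (r ^ j) * i"] by simp
    then show ?thesis by (simp add: F_def)
  qed
  have "(\<lambda>j. second_diff r n k y (F j)) sums second_diff r n k y (U r f)"
    by (rule second_diff_sums[OF F_sums])
  then have series: "(\<lambda>i. second_diff r n k y (F (i + n))) sums
      (second_diff r n k y (U r f) - (\<Sum>j<n. second_diff r n k y (F j)))"
    by (rule sums_iff_shift'[THEN iffD2])
  have tail: "second_diff r n k y (F (i + n)) = - F i (of_int k + y) / (y * (1 - y))" for i
  proof -
    have "F (i + n) = (\<lambda>x. F i (real r ^ n * x) / real r ^ n)"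
      by (auto simp: F_def power_add mult.assoc)
    then have "second_diff r n k y (F (i + n)) = second_diff r 0 k y (F i)"
      using second_diff_rescale[OF r, where n = 0 and j = n and f = "F i"] by simp
    also have "\<dots> = - F i (of_int k + y) / (y * (1 - y))"
      using F_of_int[of i k] F_of_int[of i "k + 1"] assms(3,4) by (intro second_diff_level_0) simp_all
    finally show ?thesis .
  qed
  have "(\<lambda>i. - F i (of_int k + y) / (y * (1 - y))) sums (- U r f (of_int k + y) / (y * (1 - y)))"
    by (rule sums_divide[OF sums_minus[OF F_sums]])
  with series have tail_sum: "second_diff r n k y (U r f) - (\<Sum>j<n. second_diff r n k y (F j))
      = - U r f (of_int k + y) / (y * (1 - y))"
    unfolding tail by (rule sums_unique2)
  have "second_diff r n k y (F j) = second_diff r (n - j) k y f" if "j < n" for j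
    using second_diff_rescale[OF r, where n = "n - j" and j = j and f = f] that by (simp add: F_def)
  then have "(\<Sum>j<n. second_diff r n k y (F j)) = (\<Sum>j<n. second_diff r (n - j) k y f)"
    by simp
  also have "\<dots> = (\<Sum>p=1..n. second_diff r (n - (n - p)) k y f)"
    using sum.atLeastLessThan_rev_at_least_Suc_atMost[of "\<lambda>j. second_diff r (n - j) k y f" 0 n]
    by (simp add: atLeast0LessThan)
  also have "\<dots> = (\<Sum>p=1..n. second_diff r p k y f)"
    by (intro sum.cong) auto
  finally have head: "(\<Sum>j<n. second_diff r n k y (F j)) = (\<Sum>p=1..n. second_diff r p k y f)" .
  with tail_sum show ?thesis
    using minus_divide_left[of "U r f (of_int k + y)" "y * (1 - y)"] by linarith
qed

lemma sum_inverse_powers_le: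
  fixes R :: real
  assumes "R > 1"
  shows "(\<Sum>p=1..n. (1 / R) ^ p) \<le> 1 / (R - 1)"
proof -
  define x where "x = 1 / R"
  have x: "0 < x" "x < 1" using assms by (auto simp: x_def)
  have "(\<Sum>p=1..n. x ^ p) = x * (\<Sum>p<n. x ^ p)"
    by (simp add: One_nat_def sum.atLeast1_atMost_eq sum_distrib_left)
  also have "\<dots> = x * (1 - x ^ n) / (1 - x)"
    using x by (simp add: sum_gp_strict)
  also have "\<dots> \<le> x / (1 - x)"
    using x by (intro divide_right_mono) (auto simp: mult_left_le)
  also have "\<dots> = 1 / (R - 1)"
    using assms by (simp add: x_def field_simps)
  finally show ?thesis by (simp add: x_def)
qed

lemma second_diff_U_le:
  assumes "r \<ge> 2" and "Cp f" and "m \<ge> 0" and "\<alpha> \<ge> 0" and "0 < y" and "y < 1"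
    and lower: "\<And>x. m * dist_int x \<le> f x"
    and Delta: "\<And>p k. 0 \<le> k \<Longrightarrow> k \<le> int (r ^ p) - 1 \<Longrightarrow> Delta r p k y f \<le> \<alpha>"
  shows "second_diff r n k y (U r f) \<le> \<alpha> / (2 * (real r - 1)) - m * real r / (real r - 1)"
proof -
  have r: "r > 0" "real r > 1" using assms(1) by auto
  have "(\<Sum>p=1..n. second_diff r p k y f) \<le> (\<Sum>p=1..n. \<alpha> / 2 * (1 / real r) ^ p)"
    using Delta by (intro sum_mono second_diff_le_of_Delta_le[OF assms(2) r(1)])
  also have "\<dots> = \<alpha> / 2 * (\<Sum>p=1..n. (1 / real r) ^ p)"
    by (simp add: sum_distrib_left)
  also have "\<dots> \<le> \<alpha> / 2 * (1 / (real r - 1))"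
    using sum_inverse_powers_le[OF r(2), of n] assms(4) by (intro mult_left_mono) auto
  finally have head: "(\<Sum>p=1..n. second_diff r p k y f) \<le> \<alpha> / (2 * (real r - 1))"
    by simp
  have "periodic_parabola (of_int k + y) = periodic_parabola y"
    by (metis add.commute periodic_parabola_plus_of_int)
  also have "\<dots> = y * (1 - y)"
    using assms(5,6) by (simp add: periodic_parabola_unit_interval)
  finally have "m * real r / (real r - 1) * (y * (1 - y)) \<le> U r f (of_int k + y)"
    using U_ge_periodic_parabola[OF assms(1-3) lower] by metis
  then have tail: "m * real r / (real r - 1) \<le> U r f (of_int k + y) / (y * (1 - y))"
    using assms(5,6) by (simp add: le_divide_eq)
  show ?thesis
    using second_diff_U[OF assms(1,2,5,6), of n k] head tail by linarith
qed

theorem theorem3p5: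
  fixes r :: nat and \<psi> :: "real \<Rightarrow> real" and m \<alpha> :: real
  assumes "r \<ge> 2"
    and "Cp \<psi>"
    and "m > 0" and "\<alpha> \<ge> 0"
    and "\<forall>x\<in>{0..1}. m * dist_int x \<le> \<psi> x"
    and "\<forall>n::nat. \<forall>k::int. \<forall>y\<in>{0<..<1}. 0 \<le> k \<and> k \<le> int (r ^ n) - 1 \<longrightarrow> Delta r n k y \<psi> \<le> \<alpha>"
    and "2 * m * real r > \<alpha>"
  shows "U r \<psi> \<in> Pc r ((2 * m * real r - \<alpha>) / (2 * (real r - 1)))"
proof -
  \<comment> \<open>The hypothesis \<open>2 m r > \<alpha>\<close> only makes the constant positive; the bound holds without it.\<close>
  have "second_diff r n k y (U r \<psi>) \<le> - ((2 * m * real r - \<alpha>) / (2 * (real r - 1)))"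
    if y: "0 < y" "y < 1" for n k y
  proof -
    have "second_diff r n k y (U r \<psi>) \<le> \<alpha> / (2 * (real r - 1)) - m * real r / (real r - 1)"
      using assms(3,6) y
      by (intro second_diff_U_le[OF assms(1,2) _ assms(4) y Cp_ge_dist_int[OF assms(2,5)]]) auto
    also have "\<dots> = - ((2 * m * real r - \<alpha>) / (2 * (real r - 1)))"
      using assms(1) by (simp add: divide_simps) (simp add: algebra_simps)
    finally show ?thesis .
  qed
  then show ?thesis
    using Cp_U[OF assms(1,2)] by (simp add: Pc_def second_diff_def)
qed

end
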